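(* Suppose Assumptions A and B hold and let $(\hat x,\hat t)\in\mathcal D_{\mathrm{SDP}}$. If $\mathcal F(\hat x)$ is a definite face of $\Gamma$, then $(\hat x,\hat t)\in\mathcal D$.
   Context: Fix integers $N\ge 1$, $m_I,m_E\ge 0$, $m:=m_I+m_E\ge 1$; $[a,b]=\{a,\dots,b\}$, $[n]=[1,n]$. For $i\in[0,m]$ let $q_i(x)=x^\top A_ix+2b_i^\top x+c_i$ with $A_i\in\mathbb S^N$, $b_i\in\mathbb R^N$, $c_i\in\mathbb R$. The epigraph of the QCQP is $\mathcal D:=\{(x,t)\in\mathbb R^N\times\mathbb R: q_0(x)\le 2t,\ q_i(x)\le0\ \forall i\in[m_I],\ q_i(x)=0\ \forall i\in[m_I+1,m]\}$. Let $Q_i=\begin{pmatrix}c_i& b_i^\top\\ b_i& A_i\end{pmatrix}$ and $\mathcal D_{\mathrm{SDP}}:=\{(x,t):\exists X\in\mathbb S^N$ with $Y=\begin{pmatrix}1&x^\top\\ x& X\end{pmatrix}\succeq0$, $\langle Q_0,Y\rangle\le 2t$, $\langle Q_i,Y\rangle\le 0\ \forall i\in[m_I]$, $\langle Q_i,Y\rangle= 0\ \forall i\in[m_I+1,m]\}$ (trace inner product). For $\gamma\in\mathbb R^m$, $A(\gamma)=A_0+\sum_{i=1}^m\gamma_iA_i$, $q(\gamma,x)=q_0(x)+\sum_{i=1}^m\gamma_iq_i(x)$, and $\Gamma:=\{\gamma\in\mathbb R^m: A(\gamma)\succeq 0,\ \gamma_i\ge 0\ \forall i\in[m_I]\}$.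 Assumption A: the QCQP feasible set $\{x: q_i(x)\le 0\ \forall i\in[m_I],\ q_i(x)=0\ \forall i\in[m_I+1,m]\}$ is nonempty and there is $\gamma^*$ with $\gamma^*_i\ge0$ for $i\in[m_I]$ and $A(\gamma^* )\succ 0$. Assumption B: for every $\hat x\in\mathbb R^N$, if $\sup_{\gamma\in\Gamma}q(\gamma,\hat x)$ is finite then it is attained on $\Gamma$. For such $\hat x$, $\mathcal F(\hat x):=\arg\max_{\gamma\in\Gamma}q(\gamma,\hat x)$, a nonempty face of $\Gamma$ (for $(\hat x,\hat t)\in\mathcal D_{\mathrm{SDP}}$ the supremum is finite). A nonempty face $\mathcal F$ of $\Gamma$ is definite if some $\gamma\in\mathcal F$ has $A(\gamma)\succ0$, and semidefinite otherwise. *)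

theory Defs
  imports "HOL-Analysis.Analysis"
begin

text \<open>Dimension N is the cardinality of the finite index type 'n. Constraint data are
  indexed by nat: index 0 is the objective, indices 1..m the constraints, with
  1..mI inequalities and mI+1..m equalities. Multipliers gamma are functions nat => real
  that vanish outside 1..m (a faithful encoding of R^m).\<close>

definition sym_mat :: "real^'k^'k \<Rightarrow> bool" where
  "sym_mat M \<longleftrightarrow> transpose M = M"

definition psd :: "real^'k^'k \<Rightarrow> bool" where
  "psd M \<longleftrightarrow> sym_mat M \<and> (\<forall>z. 0 \<le> z \<bullet> (M *v z))"

definition pd :: "real^'k^'k \<Rightarrow> bool" where
  "pd M \<longleftrightarrow> sym_mat M \<and> (\<forall>z. z \<noteq> 0 \<longrightarrow> 0 < z \<bullet> (M *v z))"

definition frob :: "real^'k^'k \<Rightarrow> real^'k^'k \<Rightarrow> real" where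
  "frob P Q = (\<Sum>j\<in>UNIV. \<Sum>k\<in>UNIV. P $ j $ k * Q $ j $ k)"

text \<open>Block matrix [[c, b^T],[b, A]] indexed by 'n option, None being the extra 0th index.\<close>
definition lift :: "real \<Rightarrow> real^'n \<Rightarrow> real^'n^'n \<Rightarrow> real^('n option)^('n option)" where
  "lift c b A = (\<chi> j k. (case j of
       None \<Rightarrow> (case k of None \<Rightarrow> c | Some l \<Rightarrow> b $ l)
     | Some j' \<Rightarrow> (case k of None \<Rightarrow> b $ j' | Some l \<Rightarrow> A $ j' $ l)))"

definition qf :: "real^'n^'n \<Rightarrow> real^'n \<Rightarrow> real \<Rightarrow> real^'n \<Rightarrow> real" where
  "qf A b c x = x \<bullet> (A *v x) + 2 * (b \<bullet> x) + c"

definition Agam :: "nat \<Rightarrow> (nat \<Rightarrow> real^'n^'n) \<Rightarrow> (nat \<Rightarrow> real) \<Rightarrow> real^'n^'n" where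
  "Agam m A \<gamma> = A 0 + (\<Sum>i=1..m. \<gamma> i *\<^sub>R A i)"

definition qgam :: "nat \<Rightarrow> (nat \<Rightarrow> real^'n^'n) \<Rightarrow> (nat \<Rightarrow> real^'n) \<Rightarrow> (nat \<Rightarrow> real)
    \<Rightarrow> (nat \<Rightarrow> real) \<Rightarrow> real^'n \<Rightarrow> real" where
  "qgam m A b c \<gamma> x = qf (A 0) (b 0) (c 0) x + (\<Sum>i=1..m. \<gamma> i * qf (A i) (b i) (c i) x)"

definition Gam :: "nat \<Rightarrow> nat \<Rightarrow> (nat \<Rightarrow> real^'n^'n) \<Rightarrow> (nat \<Rightarrow> real) set" where
  "Gam mI m A = {\<gamma>. (\<forall>i. i \<notin> {1..m} \<longrightarrow> \<gamma> i = 0) \<and> psd (Agam m A \<gamma>)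
                      \<and> (\<forall>i\<in>{1..mI}. 0 \<le> \<gamma> i)}"

definition Fface :: "nat \<Rightarrow> nat \<Rightarrow> (nat \<Rightarrow> real^'n^'n) \<Rightarrow> (nat \<Rightarrow> real^'n) \<Rightarrow> (nat \<Rightarrow> real)
    \<Rightarrow> real^'n \<Rightarrow> (nat \<Rightarrow> real) set" where
  "Fface mI m A b c x = {\<gamma> \<in> Gam mI m A. \<forall>\<gamma>'\<in>Gam mI m A. qgam m A b c \<gamma>' x \<le> qgam m A b c \<gamma> x}"

definition definite_face :: "nat \<Rightarrow> (nat \<Rightarrow> real^'n^'n) \<Rightarrow> (nat \<Rightarrow> real) set \<Rightarrow> bool" where
  "definite_face m A F \<longleftrightarrow> F \<noteq> {} \<and> (\<exists>\<gamma>\<in>F. pd (Agam m A \<gamma>))"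

definition in_D :: "nat \<Rightarrow> nat \<Rightarrow> (nat \<Rightarrow> real^'n^'n) \<Rightarrow> (nat \<Rightarrow> real^'n) \<Rightarrow> (nat \<Rightarrow> real)
    \<Rightarrow> real^'n \<Rightarrow> real \<Rightarrow> bool" where
  "in_D mI m A b c x t \<longleftrightarrow> qf (A 0) (b 0) (c 0) x \<le> 2 * t
     \<and> (\<forall>i\<in>{1..mI}. qf (A i) (b i) (c i) x \<le> 0)
     \<and> (\<forall>i\<in>{mI+1..m}. qf (A i) (b i) (c i) x = 0)"

definition in_D_SDP :: "nat \<Rightarrow> nat \<Rightarrow> (nat \<Rightarrow> real^'n^'n) \<Rightarrow> (nat \<Rightarrow> real^'n) \<Rightarrow> (nat \<Rightarrow> real)
    \<Rightarrow> real^'n \<Rightarrow> real \<Rightarrow> bool" where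
  "in_D_SDP mI m A b c x t \<longleftrightarrow> (\<exists>X::real^'n^'n. sym_mat X \<and>
     (let Y = lift 1 x X in psd Y
       \<and> frob (lift (c 0) (b 0) (A 0)) Y \<le> 2 * t
       \<and> (\<forall>i\<in>{1..mI}. frob (lift (c i) (b i) (A i)) Y \<le> 0)
       \<and> (\<forall>i\<in>{mI+1..m}. frob (lift (c i) (b i) (A i)) Y = 0)))"

definition assumptionA :: "nat \<Rightarrow> nat \<Rightarrow> (nat \<Rightarrow> real^'n^'n) \<Rightarrow> (nat \<Rightarrow> real^'n) \<Rightarrow> (nat \<Rightarrow> real)
    \<Rightarrow> bool" where
  "assumptionA mI m A b c \<longleftrightarrow>
     (\<exists>x::real^'n. (\<forall>i\<in>{1..mI}. qf (A i) (b i) (c i) x \<le> 0) \<and> (\<forall>i\<in>{mI+1..m}. qf (A i) (b i) (c i) x = 0))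
   \<and> (\<exists>\<gamma>. (\<forall>i\<in>{1..mI}. 0 \<le> \<gamma> i) \<and> pd (Agam m A \<gamma>))"

definition assumptionB :: "nat \<Rightarrow> nat \<Rightarrow> (nat \<Rightarrow> real^'n^'n) \<Rightarrow> (nat \<Rightarrow> real^'n) \<Rightarrow> (nat \<Rightarrow> real)
    \<Rightarrow> bool" where
  "assumptionB mI m A b c \<longleftrightarrow> (\<forall>x::real^'n.
     (\<exists>M. \<forall>\<gamma>\<in>Gam mI m A. qgam m A b c \<gamma> x \<le> M) \<longrightarrow>
     (\<exists>\<gamma>\<in>Gam mI m A. \<forall>\<gamma>'\<in>Gam mI m A. qgam m A b c \<gamma>' x \<le> qgam m A b c \<gamma> x))"

end

theory Submission
  imports Defs
begin

text \<open>Take \<gamma> in F(x) with A(\<gamma>) positive definite. Positive definiteness survives small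
  perturbations, so \<gamma> + s d stays in \<Gamma> for every admissible direction d and all small s;
  maximality of q(-, x) at \<gamma> then forces q_i(x) \<le> 0 on the inequalities, q_i(x) = 0 on the
  equalities and \<Sum> \<gamma>_i q_i(x) = 0. On the SDP side, Y \<succeq> 0 means Z = X - x x^T \<succeq> 0, and
  \<langle>Q_i, Y\<rangle> = q_i(x) + \<langle>A_i, Z\<rangle>. Aggregating the SDP constraints with the weights \<gamma>
  gives 2t \<ge> q(\<gamma>, x) + \<langle>A(\<gamma>), Z\<rangle> \<ge> q_0(x), because the trace inner product of two psd
  matrices is nonnegative. Assumptions A and B only serve to make F(x) nonempty, which
  definiteness of the face already provides.\<close>

section \<open>Positive semidefinite matrices\<close>

lemma sym_mat_iff: "sym_mat M \<longleftrightarrow> (\<forall>j k. M$k$j = M$j$k)"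
  unfolding sym_mat_def transpose_def by (auto simp: vec_eq_iff)

lemma psd_quadratic_nonneg: "psd M \<Longrightarrow> 0 \<le> z \<bullet> (M *v z)"
  unfolding psd_def by blast

lemma psd_sym: "psd M \<Longrightarrow> M$k$j = M$j$k"
  unfolding psd_def sym_mat_iff by blast

lemma pd_imp_psd: "pd M \<Longrightarrow> psd M"
  unfolding pd_def psd_def by (metis inner_zero_left order.refl less_imp_le)

lemma quadratic_form_axis: "axis j 1 \<bullet> (M *v axis j (1::real)) = M$j$j"
  by (simp add: matrix_vector_mul_component inner_axis' inner_axis)

lemma psd_diag_nonneg: "psd M \<Longrightarrow> 0 \<le> M$j$j"
  using psd_quadratic_nonneg[of M "axis j 1"] by (simp add: quadratic_form_axis)

lemma psd_zero_diag_imp_zero: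
  assumes p: "psd M" and d: "M$j$j = 0"
  shows "M$j$k = 0"
proof (rule ccontr)
  assume ne: "M$j$k \<noteq> 0"
  define t where "t = - (M$k$k + 1) / (2 * M$j$k)"
  have "0 \<le> (t *\<^sub>R axis j 1 + axis k 1) \<bullet> (M *v (t *\<^sub>R axis j 1 + axis k 1))"
    using p by (rule psd_quadratic_nonneg)
  also have "\<dots> = t\<^sup>2 * M$j$j + t * (M$j$k + M$k$j) + M$k$k"
    by (simp add: inner_add_left inner_add_right matrix_vector_right_distrib
        matrix_vector_mult_scaleR inner_axis' inner_axis matrix_vector_mul_component
        algebra_simps power2_eq_square)
  also have "\<dots> = 2 * t * M$j$k + M$k$k" using d psd_sym[OF p, of k j] by (simp add: algebra_simps)
  also have "\<dots> = -1" using ne unfolding t_def by (simp add: field_simps)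
  finally show False by simp
qed

lemma psd_row_inner_square_le:
  assumes p: "psd M"
  shows "(M$j \<bullet> z)\<^sup>2 \<le> M$j$j * (z \<bullet> (M *v z))"
proof (cases "M$j$j = 0")
  case True
  then have "M$j = 0" using psd_zero_diag_imp_zero[OF p] by (simp add: vec_eq_iff)
  then show ?thesis by simp
next
  case False
  define d where "d = M$j$j"
  define r where "r = M$j \<bullet> z"
  have d0: "d > 0" using False psd_diag_nonneg[OF p, of j] unfolding d_def by simp
  have col: "M *v axis j 1 = M$j"
    using psd_sym[OF p] by (simp add: vec_eq_iff matrix_vector_mul_component inner_axis)
  define t where "t = - r / d"
  have "0 \<le> (z + t *\<^sub>R axis j 1) \<bullet> (M *v (z + t *\<^sub>R axis j 1))"
    using p by (rule psd_quadratic_nonneg)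
  also have "\<dots> = z \<bullet> (M *v z) + 2 * t * r + t\<^sup>2 * d"
    using col psd_sym[OF p] unfolding r_def d_def
    by (simp add: inner_add_left inner_add_right matrix_vector_right_distrib
        matrix_vector_mult_scaleR inner_axis' inner_axis matrix_vector_mul_component
        algebra_simps power2_eq_square inner_commute)
  also have "\<dots> = z \<bullet> (M *v z) - r\<^sup>2 / d"
    unfolding t_def using d0 by (simp add: field_simps power2_eq_square)
  finally have "r\<^sup>2 \<le> d * (z \<bullet> (M *v z))" using d0 by (simp add: field_simps)
  then show ?thesis unfolding r_def d_def .
qed

definition outer :: "real^'k \<Rightarrow> real^'k^'k" where
  "outer v = (\<chi> a b. v$a * v$b)"

lemma quadratic_form_outer: "z \<bullet> (outer v *v z) = (v \<bullet> z)\<^sup>2"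
  by (simp add: outer_def inner_vec_def matrix_vector_mult_def power2_eq_square sum_product
      sum_distrib_left algebra_simps)

lemma frob_outer: "frob (outer v) Z = v \<bullet> (Z *v v)"
  by (simp add: outer_def frob_def inner_vec_def matrix_vector_mult_def sum_distrib_left
      algebra_simps)

lemma psd_outer: "psd (outer v)"
  unfolding psd_def sym_mat_iff by (simp add: quadratic_form_outer) (simp add: outer_def)

lemma frob_diff: "frob (P - Q) Z = frob P Z - frob Q Z"
  by (simp add: frob_def algebra_simps sum_subtractf)

lemma frob_add_left: "frob (P + Q) R = frob P R + frob Q R"
  by (simp add: frob_def distrib_right sum.distrib)

lemma frob_scaleR: "frob (s *\<^sub>R P) R = s * frob P R"
  by (simp add: frob_def sum_distrib_left mult.assoc)

lemma frob_commute: "frob P Q = frob Q P"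
  by (simp add: frob_def mult.commute)

lemma frob_sum: "finite I \<Longrightarrow> frob (\<Sum>i\<in>I. g i *\<^sub>R P i) Z = (\<Sum>i\<in>I. g i * frob (P i) Z)"
  by (induction I rule: finite_induct) (simp_all add: frob_add_left frob_scaleR, simp add: frob_def)

lemma psd_deflate:
  assumes p: "psd M" and d: "0 < M$j$j"
  shows "psd (M - (1 / M$j$j) *\<^sub>R outer (M$j))"
proof -
  have "(M$j \<bullet> z)\<^sup>2 / M$j$j \<le> z \<bullet> (M *v z)" for z
    using psd_row_inner_square_le[OF p, of j z] d by (simp add: field_simps)
  moreover have "sym_mat (M - (1 / M$j$j) *\<^sub>R outer (M$j))"
    using psd_sym[OF p] unfolding sym_mat_iff by (simp add: outer_def)
  ultimately show ?thesis
    unfolding psd_def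
    by (simp add: matrix_vector_mult_diff_rdistrib scaleR_matrix_vector_assoc[symmetric]
        inner_diff_right quadratic_form_outer)
qed

text \<open>Induction on the number of nonzero diagonal entries: subtracting the rank-one matrix
  spanned by a row j with M_jj > 0 kills the j-th diagonal entry and keeps zero diagonal
  entries zero, since a psd matrix with a zero diagonal entry has a zero row.\<close>

lemma frob_psd_nonneg:
  assumes "psd M" and pZ: "psd Z"
  shows "0 \<le> frob M Z"
  using assms(1)
proof (induction "card {a. M$a$a \<noteq> 0}" arbitrary: M rule: less_induct)
  case (less M)
  show ?case
  proof (cases "\<exists>j. M$j$j \<noteq> 0")
    case False
    then have "M = 0" using psd_zero_diag_imp_zero[OF less.prems] by (simp add: vec_eq_iff)
    then show ?thesis by (simp add: frob_def)
  next
    case True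
    then obtain j where "M$j$j \<noteq> 0" by blast
    then have d: "0 < M$j$j" using psd_diag_nonneg[OF less.prems, of j] by simp
    define M' where "M' = M - (1 / M$j$j) *\<^sub>R outer (M$j)"
    have p': "psd M'" unfolding M'_def by (rule psd_deflate[OF less.prems d])
    have "{a. M'$a$a \<noteq> 0} \<subseteq> {a. M$a$a \<noteq> 0} - {j}"
      using d psd_zero_diag_imp_zero[OF less.prems] psd_sym[OF less.prems]
      by (auto simp: M'_def outer_def)
    then have "card {a. M'$a$a \<noteq> 0} \<le> card ({a. M$a$a \<noteq> 0} - {j})"
      by (simp add: card_mono)
    also have "\<dots> < card {a. M$a$a \<noteq> 0}"
      using d by (intro card_Diff1_less) auto
    finally have "0 \<le> frob M' Z" using less.hyps p' by blast
    moreover have "0 \<le> frob ((1 / M$j$j) *\<^sub>R outer (M$j)) Z"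
      using d psd_quadratic_nonneg[OF pZ] by (simp add: frob_scaleR frob_outer)
    ultimately show ?thesis unfolding M'_def frob_diff by simp
  qed
qed

section \<open>Perturbing a positive definite matrix\<close>

lemma pd_quadratic_lower_bound:
  fixes M :: "real^'k^'k"
  assumes "pd M"
  shows "\<exists>\<mu>>0. \<forall>z. \<mu> * (norm z)\<^sup>2 \<le> z \<bullet> (M *v z)"
proof -
  let ?S = "sphere (0::real^'k) 1"
  have ne: "?S \<noteq> {}" using norm_axis_1 by (metis dist_0_norm empty_iff mem_sphere norm_one)
  have "continuous_on ?S (\<lambda>z. z \<bullet> (M *v z))"
    by (intro continuous_on_inner continuous_on_id matrix_vector_mult_linear_continuous_on)
  then obtain z0 where z0: "z0 \<in> ?S" and min: "\<forall>u\<in>?S. z0 \<bullet> (M *v z0) \<le> u \<bullet> (M *v u)"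
    using continuous_attains_inf[OF compact_sphere ne] by blast
  have pos: "0 < z0 \<bullet> (M *v z0)"
    using assms z0 unfolding pd_def by (metis mem_sphere_0 norm_zero zero_neq_one)
  have "z0 \<bullet> (M *v z0) * (norm z)\<^sup>2 \<le> z \<bullet> (M *v z)" for z
  proof (cases "z = 0")
    case False
    define u where "u = (1 / norm z) *\<^sub>R z"
    have "u \<in> ?S" using False unfolding u_def by simp
    then have "z0 \<bullet> (M *v z0) * (norm z)\<^sup>2 \<le> (norm z)\<^sup>2 * (u \<bullet> (M *v u))"
      using min by (simp add: mult.commute mult_right_mono)
    also have "\<dots> = z \<bullet> (M *v z)"
      using False unfolding u_def
      by (simp add: matrix_vector_mult_scaleR power2_eq_square field_simps)
    finally show ?thesis .
  qed simp
  then show ?thesis using pos by blast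
qed

lemma quadratic_form_upper_bound:
  fixes P :: "real^'k^'k"
  shows "\<exists>K. \<forall>z. \<bar>z \<bullet> (P *v z)\<bar> \<le> K * (norm z)\<^sup>2"
proof -
  obtain K where K: "\<forall>z. norm (P *v z) \<le> norm z * K"
    using bounded_linear.pos_bounded[OF matrix_vector_mul_bounded_linear] by blast
  have "\<bar>z \<bullet> (P *v z)\<bar> \<le> K * (norm z)\<^sup>2" for z
  proof -
    have "\<bar>z \<bullet> (P *v z)\<bar> \<le> norm z * norm (P *v z)" by (rule Cauchy_Schwarz_ineq2)
    also have "\<dots> \<le> norm z * (norm z * K)" using K by (simp add: mult_left_mono)
    finally show ?thesis by (simp add: power2_eq_square mult_ac)
  qed
  then show ?thesis by blast
qed

lemma pd_perturb_psd:
  fixes M P :: "real^'k^'k"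
  assumes "pd M" and "sym_mat P"
  shows "\<exists>e>0. \<forall>s. \<bar>s\<bar> \<le> e \<longrightarrow> psd (M + s *\<^sub>R P)"
proof -
  obtain \<mu> where \<mu>: "\<mu> > 0" "\<forall>z. \<mu> * (norm z)\<^sup>2 \<le> z \<bullet> (M *v z)"
    using pd_quadratic_lower_bound[OF assms(1)] by blast
  obtain K where K: "\<forall>z. \<bar>z \<bullet> (P *v z)\<bar> \<le> K * (norm z)\<^sup>2"
    using quadratic_form_upper_bound by blast
  define e where "e = \<mu> / (\<bar>K\<bar> + 1)"
  have e: "e > 0" "e * \<bar>K\<bar> \<le> \<mu>" unfolding e_def using \<mu>(1) by (auto simp: field_simps)
  have "psd (M + s *\<^sub>R P)" if s: "\<bar>s\<bar> \<le> e" for s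
  proof -
    have "0 \<le> z \<bullet> ((M + s *\<^sub>R P) *v z)" for z
    proof -
      have "\<bar>s * (z \<bullet> (P *v z))\<bar> \<le> e * (\<bar>K\<bar> * (norm z)\<^sup>2)"
        unfolding abs_mult using s K e(1)
        by (intro mult_mono) (auto intro: order_trans[OF _ mult_right_mono[OF abs_ge_self]])
      also have "\<dots> \<le> \<mu> * (norm z)\<^sup>2" using e(2) by (simp add: mult.assoc[symmetric] mult_right_mono)
      finally have "- (s * (z \<bullet> (P *v z))) \<le> z \<bullet> (M *v z)"
        using \<mu>(2) abs_le_D2 order_trans by blast
      then show ?thesis
        by (simp add: matrix_vector_mult_add_rdistrib scaleR_matrix_vector_assoc[symmetric]
            inner_add_right)
    qed
    moreover have "sym_mat (M + s *\<^sub>R P)"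
      using assms unfolding pd_def sym_mat_iff by simp
    ultimately show ?thesis unfolding psd_def by blast
  qed
  then show ?thesis using e(1) by blast
qed

section \<open>Moment matrices\<close>

lemma sum_UNIV_option: "sum f (UNIV :: 'a::finite option set) = f None + (\<Sum>l\<in>UNIV. f (Some l))"
proof -
  have "(UNIV :: 'a option set) = insert None (range Some)" by (auto simp: UNIV_option_conv)
  moreover have "sum f (insert None (range Some)) = f None + sum f (range Some)"
    by (rule sum.insert) auto
  ultimately show ?thesis by (simp add: sum.reindex)
qed

lemma frob_lift: "frob (lift c b A) (lift c' b' A') = c * c' + 2 * (b \<bullet> b') + frob A A'"
  by (simp add: frob_def sum_UNIV_option lift_def inner_vec_def sum.distrib)

lemma frob_lift_moment: "frob (lift c b A) (lift 1 x X) = qf A b c x + frob A (X - outer x)"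
proof -
  have "frob A (X - outer x) = frob A X - x \<bullet> (A *v x)"
    by (simp add: frob_commute[of A] frob_diff frob_outer)
  then show ?thesis by (simp add: frob_lift qf_def inner_commute)
qed

lemma outer_option:
  "outer (\<chi> a. case a of None \<Rightarrow> w | Some l \<Rightarrow> z$l) = lift (w * w) (w *\<^sub>R z) (outer z)"
  by (simp add: vec_eq_iff outer_def lift_def split: option.splits)

lemma sym_lift_imp_sym: "sym_mat (lift c b A) \<Longrightarrow> sym_mat A"
  unfolding sym_mat_iff by (metis (no_types, lifting) lift_def option.simps(5) vec_lambda_beta)

text \<open>The Schur complement of the corner 1 in the moment matrix: test the form of
  lift 1 x X against the vector (-(x \<bullet> z), z).\<close>

lemma psd_lift_moment:
  assumes Y: "psd (lift 1 x X)"
  shows "psd (X - outer x)"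
proof -
  have "0 \<le> z \<bullet> ((X - outer x) *v z)" for z
  proof -
    define w where "w = - (x \<bullet> z)"
    have "0 \<le> frob (outer (\<chi> a. case a of None \<Rightarrow> w | Some l \<Rightarrow> z$l)) (lift 1 x X)"
      unfolding frob_outer using Y by (rule psd_quadratic_nonneg)
    also have "\<dots> = z \<bullet> ((X - outer x) *v z)"
      unfolding outer_option frob_lift frob_outer w_def
      by (simp add: matrix_vector_mult_diff_rdistrib inner_diff_right quadratic_form_outer
          inner_commute power2_eq_square)
    finally show ?thesis .
  qed
  moreover have "sym_mat (X - outer x)"
    using sym_lift_imp_sym[of 1 x X] Y psd_outer[of x]
    unfolding psd_def sym_mat_iff by simp
  ultimately show ?thesis unfolding psd_def by blast
qed

section \<open>First-order conditions at a definite maximizer\<close>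

lemma sym_mat_weighted_sum:
  "\<forall>i\<in>I. sym_mat (A i) \<Longrightarrow> sym_mat (\<Sum>i\<in>I. d i *\<^sub>R A i)"
  unfolding sym_mat_iff by (simp add: sum_component)

lemma Agam_perturb: "Agam m A (\<lambda>i. g i + s * d i) = Agam m A g + s *\<^sub>R (\<Sum>i=1..m. d i *\<^sub>R A i)"
  by (simp add: Agam_def scaleR_add_left sum.distrib scaleR_sum_right)

lemma qgam_perturb:
  "qgam m A b c (\<lambda>i. g i + s * d i) x
     = qgam m A b c g x + s * (\<Sum>i=1..m. d i * qf (A i) (b i) (c i) x)"
  by (simp add: qgam_def distrib_right sum.distrib sum_distrib_left mult.assoc)

lemma Gam_perturb:
  assumes symA: "\<forall>i\<in>{0..m}. sym_mat (A i)" and g: "g \<in> Gam mI m A" and pd: "pd (Agam m A g)"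
    and d: "\<forall>i. i \<notin> {1..m} \<longrightarrow> d i = 0"
  obtains e where "e > 0"
    "\<And>s. \<bar>s\<bar> \<le> e \<Longrightarrow> \<forall>i\<in>{1..mI}. 0 \<le> g i + s * d i \<Longrightarrow> (\<lambda>i. g i + s * d i) \<in> Gam mI m A"
proof -
  have "sym_mat (\<Sum>i=1..m. d i *\<^sub>R A i)" using symA by (intro sym_mat_weighted_sum) auto
  then obtain e where "e > 0" "\<forall>s. \<bar>s\<bar> \<le> e \<longrightarrow> psd (Agam m A (\<lambda>i. g i + s * d i))"
    using pd_perturb_psd[OF pd] unfolding Agam_perturb by blast
  then show thesis using g d by (intro that) (auto simp: Gam_def)
qed

lemma Fface_perturb:
  assumes symA: "\<forall>i\<in>{0..m}. sym_mat (A i)" and g: "g \<in> Fface mI m A b c x"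
    and pd: "pd (Agam m A g)" and d: "\<forall>i. i \<notin> {1..m} \<longrightarrow> d i = 0"
  obtains e where "e > 0"
    "\<And>s. \<bar>s\<bar> \<le> e \<Longrightarrow> \<forall>i\<in>{1..mI}. 0 \<le> g i + s * d i
       \<Longrightarrow> s * (\<Sum>i=1..m. d i * qf (A i) (b i) (c i) x) \<le> 0"
proof -
  have gG: "g \<in> Gam mI m A"
    and max: "\<forall>g'\<in>Gam mI m A. qgam m A b c g' x \<le> qgam m A b c g x"
    using g unfolding Fface_def by auto
  obtain e where "e > 0"
    "\<And>s. \<bar>s\<bar> \<le> e \<Longrightarrow> \<forall>i\<in>{1..mI}. 0 \<le> g i + s * d i \<Longrightarrow> (\<lambda>i. g i + s * d i) \<in> Gam mI m A"
    using Gam_perturb[OF symA gG pd d] by blast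
  then show thesis using max qgam_perturb[of m A b c g s d x for s] by (intro that) force+
qed

lemma definite_Fface_feasible:
  assumes symA: "\<forall>i\<in>{0..m}. sym_mat (A i)" and g: "g \<in> Fface mI m A b c x"
    and pd: "pd (Agam m A g)" and i: "i \<in> {1..m}"
  shows "qf (A i) (b i) (c i) x \<le> 0" and "mI < i \<Longrightarrow> qf (A i) (b i) (c i) x = 0"
proof -
  define d where "d j = (if j = i then 1 else 0::real)" for j
  have gnn: "\<forall>j\<in>{1..mI}. 0 \<le> g j" using g unfolding Fface_def Gam_def by auto
  have "\<forall>j. j \<notin> {1..m} \<longrightarrow> d j = 0" using i unfolding d_def by auto
  then obtain e where e: "e > 0"
    "\<And>s. \<bar>s\<bar> \<le> e \<Longrightarrow> \<forall>j\<in>{1..mI}. 0 \<le> g j + s * d j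
       \<Longrightarrow> s * (\<Sum>j=1..m. d j * qf (A j) (b j) (c j) x) \<le> 0"
    using Fface_perturb[OF symA g pd] by blast
  have sum_d: "(\<Sum>j=1..m. d j * qf (A j) (b j) (c j) x) = qf (A i) (b i) (c i) x"
  proof -
    have "(\<Sum>j=1..m. d j * qf (A j) (b j) (c j) x)
        = (\<Sum>j=1..m. if j = i then qf (A j) (b j) (c j) x else 0)"
      unfolding d_def by (rule sum.cong) simp_all
    then show ?thesis using i by simp
  qed
  have "e * qf (A i) (b i) (c i) x \<le> 0"
    using e(2)[of e] e(1) gnn unfolding sum_d by (simp add: d_def)
  then show le: "qf (A i) (b i) (c i) x \<le> 0" using e(1) by (simp add: mult_le_0_iff)
  assume "mI < i"
  then have "- e * qf (A i) (b i) (c i) x \<le> 0"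
    using e(2)[of "- e"] e(1) gnn unfolding sum_d by (simp add: d_def)
  then have "0 \<le> qf (A i) (b i) (c i) x" using e(1) by (simp add: zero_le_mult_iff)
  with le show "qf (A i) (b i) (c i) x = 0" by linarith
qed

text \<open>Complementary slackness: \<gamma> can be scaled by 1 \<pm> s while staying in \<Gamma>.\<close>

lemma definite_Fface_complementary:
  assumes symA: "\<forall>i\<in>{0..m}. sym_mat (A i)" and g: "g \<in> Fface mI m A b c x"
    and pd: "pd (Agam m A g)"
  shows "(\<Sum>i=1..m. g i * qf (A i) (b i) (c i) x) = 0"
proof -
  have g0: "\<forall>i. i \<notin> {1..m} \<longrightarrow> g i = 0" and gnn: "\<forall>i\<in>{1..mI}. 0 \<le> g i"
    using g unfolding Fface_def Gam_def by auto
  obtain e where e: "e > 0"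
    "\<And>s. \<bar>s\<bar> \<le> e \<Longrightarrow> \<forall>i\<in>{1..mI}. 0 \<le> g i + s * g i
       \<Longrightarrow> s * (\<Sum>i=1..m. g i * qf (A i) (b i) (c i) x) \<le> 0"
    using Fface_perturb[OF symA g pd g0] by blast
  let ?S = "\<Sum>i=1..m. g i * qf (A i) (b i) (c i) x"
  define s where "s = min e 1"
  have s: "0 < s" "\<bar>- s\<bar> \<le> e" "s \<le> 1" using e(1) unfolding s_def by auto
  have "e * ?S \<le> 0" using e gnn by simp
  then have "?S \<le> 0" using e(1) by (simp add: mult_le_0_iff)
  moreover have "\<forall>i\<in>{1..mI}. 0 \<le> g i + - s * g i"
    using gnn s(1,3) by (auto simp: algebra_simps intro!: mult_left_le_one_le)
  then have "- s * ?S \<le> 0" by (rule e(2)[OF s(2)])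
  then have "0 \<le> ?S" using s(1) by (simp add: zero_le_mult_iff)
  ultimately show ?thesis by linarith
qed

lemma frob_lift_lagrangian:
  "frob (lift (c 0) (b 0) (A 0)) (lift 1 x X)
     + (\<Sum>i=1..m. g i * frob (lift (c i) (b i) (A i)) (lift 1 x X))
   = qgam m A b c g x + frob (Agam m A g) (X - outer x)"
  by (simp add: frob_lift_moment qgam_def Agam_def frob_add_left frob_sum distrib_left
      sum.distrib)

theorem mainTheorem3:
  fixes mI mE m :: nat
    and A :: "nat \<Rightarrow> real^'n^'n" and b :: "nat \<Rightarrow> real^'n" and c :: "nat \<Rightarrow> real"
    and xh :: "real^'n" and th :: real
  assumes "m = mI + mE" and "1 \<le> m"
    and "\<forall>i\<in>{0..m}. sym_mat (A i)"
    and "assumptionA mI m A b c"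
    and "assumptionB mI m A b c"
    and "in_D_SDP mI m A b c xh th"
    and "definite_face m A (Fface mI m A b c xh)"
  shows "in_D mI m A b c xh th"
proof -
  obtain g where g: "g \<in> Fface mI m A b c xh" and pd: "pd (Agam m A g)"
    using assms(7) unfolding definite_face_def by blast
  have gnn: "\<forall>i\<in>{1..mI}. 0 \<le> g i" using g unfolding Fface_def Gam_def by auto
  obtain X where Y: "psd (lift 1 xh X)"
    and obj: "frob (lift (c 0) (b 0) (A 0)) (lift 1 xh X) \<le> 2 * th"
    and ineq: "\<forall>i\<in>{1..mI}. frob (lift (c i) (b i) (A i)) (lift 1 xh X) \<le> 0"
    and eq: "\<forall>i\<in>{mI+1..m}. frob (lift (c i) (b i) (A i)) (lift 1 xh X) = 0"
    using assms(6) unfolding in_D_SDP_def Let_def by blast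
  have "(\<Sum>i=1..m. g i * frob (lift (c i) (b i) (A i)) (lift 1 xh X)) \<le> 0"
  proof (rule sum_nonpos)
    fix i assume "i \<in> {1..m}"
    then show "g i * frob (lift (c i) (b i) (A i)) (lift 1 xh X) \<le> 0"
      using gnn ineq eq by (cases "i \<le> mI") (auto intro: mult_nonneg_nonpos)
  qed
  moreover have "0 \<le> frob (Agam m A g) (X - outer xh)"
    using frob_psd_nonneg[OF pd_imp_psd[OF pd] psd_lift_moment[OF Y]] .
  moreover have "qgam m A b c g xh = qf (A 0) (b 0) (c 0) xh"
    using definite_Fface_complementary[OF assms(3) g pd] unfolding qgam_def by simp
  ultimately have "qf (A 0) (b 0) (c 0) xh \<le> 2 * th"
    using obj frob_lift_lagrangian[of c b A xh X g m] by linarith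
  then show ?thesis
    unfolding in_D_def using definite_Fface_feasible[OF assms(3) g pd] assms(1) by auto
qed

end
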